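(* Let $\boldsymbol x^*$ be a pure Nash equilibrium of $\mathcal L(n,S)$ satisfying the vertex property, and let $[a,b]$ be an $\boldsymbol x^*$-half interval. Then $\lambda([a,b])\le\Lambda/n$, where $\Lambda=\lambda(S)$.
   Context: Network: $(V,E)$ is a finite connected graph with no vertex of degree $2$; each edge $e$ has a length $\lambda(e)>0$. $S$ is the metric measure space obtained by identifying each edge with a segment of length $\lambda(e)$, with length measure $\lambda$ and shortest-path distance $d$. A leaf is a vertex of degree $1$. Location game $\mathcal L(n,S)$: $n$ players each choose a point of $S$. Consumers are distributed according to $\lambda$, and each shops at a closest occupied location. Consumers equidistant from several closest occupied locations are split equally among those locations, and the share of a location is split equally among the players located there. Payoff is the mass of consumers attracted. Nash equilibria are pure. Vertex property: every vertex of degree $\ge3$ is occupied. For a profile $\boldsymbol x$ with the vertex property, a segment $[a,b]$ contained in an edge $e$ is an $\boldsymbol x$-half interval if one of the following holds (with the roles of $a$ and $b$ interchangeable): (i) $a=x_i$ for some player $i$, $b$ is a leaf endpoint of $e$, and no player is located in $(a,b]$; (ii) $a=x_i$ and $x_\ell\in e$ for players $i,\ell$, no player is located strictly between $a$ and $x_\ell$, and $b$ is the midpoint between $a$ and $x_\ell$. *)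

theory Defs
  imports "HOL-Analysis.Analysis"
begin

text \<open>A graph is given by a vertex set V and a set E of edges, each edge an
ordered pair (a,b) of distinct vertices (orientation is only used to
parametrise the edge: parameter 0 is a, parameter len e is b).\<close>

datatype 'v pt = Vtx 'v | Inn "'v \<times> 'v" real

definition deg :: "('v \<times> 'v) set \<Rightarrow> 'v \<Rightarrow> nat" where
  "deg E v = card {e \<in> E. fst e = v \<or> snd e = v}"

definition adjacent :: "('v \<times> 'v) set \<Rightarrow> 'v \<Rightarrow> 'v \<Rightarrow> bool" where
  "adjacent E u w \<longleftrightarrow> (u, w) \<in> E \<or> (w, u) \<in> E"

definition is_walk :: "('v \<times> 'v) set \<Rightarrow> 'v list \<Rightarrow> bool" where
  "is_walk E xs \<longleftrightarrow> xs \<noteq> [] \<and> (\<forall>k. Suc k < length xs \<longrightarrow> adjacent E (xs ! k) (xs ! Suc k))"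

definition connected_graph :: "'v set \<Rightarrow> ('v \<times> 'v) set \<Rightarrow> bool" where
  "connected_graph V E \<longleftrightarrow> V \<noteq> {} \<and>
     (\<forall>u\<in>V. \<forall>w\<in>V. \<exists>xs. is_walk E xs \<and> hd xs = u \<and> last xs = w)"

definition network :: "'v set \<Rightarrow> ('v \<times> 'v) set \<Rightarrow> ('v \<times> 'v \<Rightarrow> real) \<Rightarrow> bool" where
  "network V E len \<longleftrightarrow> finite V \<and> E \<subseteq> V \<times> V
     \<and> (\<forall>(a, b)\<in>E. a \<noteq> b \<and> (b, a) \<notin> E)
     \<and> connected_graph V E
     \<and> (\<forall>v\<in>V. deg E v \<noteq> 2)
     \<and> (\<forall>e\<in>E. len e > 0)"

definition elen :: "('v \<times> 'v) set \<Rightarrow> ('v \<times> 'v \<Rightarrow> real) \<Rightarrow> 'v \<Rightarrow> 'v \<Rightarrow> real" where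
  "elen E len u w = (if (u, w) \<in> E then len (u, w) else len (w, u))"

definition walk_len :: "('v \<times> 'v) set \<Rightarrow> ('v \<times> 'v \<Rightarrow> real) \<Rightarrow> 'v list \<Rightarrow> real" where
  "walk_len E len xs = (\<Sum>k<length xs - 1. elen E len (xs ! k) (xs ! Suc k))"

definition vdist :: "('v \<times> 'v) set \<Rightarrow> ('v \<times> 'v \<Rightarrow> real) \<Rightarrow> 'v \<Rightarrow> 'v \<Rightarrow> real" where
  "vdist E len u w = Inf {walk_len E len xs | xs. is_walk E xs \<and> hd xs = u \<and> last xs = w}"

definition Spts :: "'v set \<Rightarrow> ('v \<times> 'v) set \<Rightarrow> ('v \<times> 'v \<Rightarrow> real) \<Rightarrow> 'v pt set" where
  "Spts V E len = Vtx ` V \<union> {Inn e t | e t. e \<in> E \<and> 0 < t \<and> t < len e}"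

definition point :: "('v \<times> 'v \<Rightarrow> real) \<Rightarrow> 'v \<times> 'v \<Rightarrow> real \<Rightarrow> 'v pt" where
  "point len e t = (if t = 0 then Vtx (fst e) else if t = len e then Vtx (snd e) else Inn e t)"

fun pvdist :: "('v \<times> 'v) set \<Rightarrow> ('v \<times> 'v \<Rightarrow> real) \<Rightarrow> 'v pt \<Rightarrow> 'v \<Rightarrow> real" where
  "pvdist E len (Vtx v) w = vdist E len v w"
| "pvdist E len (Inn e t) w =
     min (t + vdist E len (fst e) w) ((len e - t) + vdist E len (snd e) w)"

text \<open>Shortest-path distance between points of S: a path leaving an
interior point either stays in its edge or exits through an endpoint.\<close>
fun pdist :: "('v \<times> 'v) set \<Rightarrow> ('v \<times> 'v \<Rightarrow> real) \<Rightarrow> 'v pt \<Rightarrow> 'v pt \<Rightarrow> real" where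
  "pdist E len (Vtx v) q = pvdist E len q v"
| "pdist E len (Inn e s) q =
     (let via = min (s + pvdist E len q (fst e)) ((len e - s) + pvdist E len q (snd e))
      in case q of Inn e' t \<Rightarrow> (if e' = e then min \<bar>s - t\<bar> via else via) | Vtx _ \<Rightarrow> via)"

text \<open>Profiles: x i is the location of player i, players are 0..<n.\<close>

definition occupied :: "nat \<Rightarrow> (nat \<Rightarrow> 'v pt) \<Rightarrow> 'v pt set" where
  "occupied n x = x ` {..<n}"

definition share :: "('v \<times> 'v) set \<Rightarrow> ('v \<times> 'v \<Rightarrow> real) \<Rightarrow> nat \<Rightarrow> (nat \<Rightarrow> 'v pt) \<Rightarrow> nat \<Rightarrow> 'v pt \<Rightarrow> real" where
  "share E len n x i y =
    (let L = occupied n x;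
         m = Min ((\<lambda>l. pdist E len y l) ` L);
         C = {l \<in> L. pdist E len y l = m}
     in if x i \<in> C then 1 / (real (card C) * real (card {j \<in> {..<n}. x j = x i})) else 0)"

definition payoff :: "('v \<times> 'v) set \<Rightarrow> ('v \<times> 'v \<Rightarrow> real) \<Rightarrow> nat \<Rightarrow> (nat \<Rightarrow> 'v pt) \<Rightarrow> nat \<Rightarrow> real" where
  "payoff E len n x i = (\<Sum>e\<in>E. integral {0..len e} (\<lambda>t. share E len n x i (point len e t)))"

definition profile :: "'v set \<Rightarrow> ('v \<times> 'v) set \<Rightarrow> ('v \<times> 'v \<Rightarrow> real) \<Rightarrow> nat \<Rightarrow> (nat \<Rightarrow> 'v pt) \<Rightarrow> bool" where
  "profile V E len n x \<longleftrightarrow> (\<forall>i<n. x i \<in> Spts V E len)"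

definition nash_eq :: "'v set \<Rightarrow> ('v \<times> 'v) set \<Rightarrow> ('v \<times> 'v \<Rightarrow> real) \<Rightarrow> nat \<Rightarrow> (nat \<Rightarrow> 'v pt) \<Rightarrow> bool" where
  "nash_eq V E len n x \<longleftrightarrow> profile V E len n x \<and>
     (\<forall>i<n. \<forall>y\<in>Spts V E len. payoff E len n (x(i := y)) i \<le> payoff E len n x i)"

definition vertex_property :: "'v set \<Rightarrow> ('v \<times> 'v) set \<Rightarrow> nat \<Rightarrow> (nat \<Rightarrow> 'v pt) \<Rightarrow> bool" where
  "vertex_property V E n x \<longleftrightarrow> (\<forall>v\<in>V. deg E v \<ge> 3 \<longrightarrow> (\<exists>i<n. x i = Vtx v))"

definition half_interval :: "('v \<times> 'v) set \<Rightarrow> ('v \<times> 'v \<Rightarrow> real) \<Rightarrow> nat \<Rightarrow> (nat \<Rightarrow> 'v pt)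
    \<Rightarrow> 'v \<times> 'v \<Rightarrow> real \<Rightarrow> real \<Rightarrow> bool" where
  "half_interval E len n x e s t \<longleftrightarrow> e \<in> E \<and> 0 \<le> s \<and> s \<le> t \<and> t \<le> len e \<and>
    ( \<comment> \<open>(i): one end is a player, the other end a leaf endpoint of e\<close>
      (\<exists>i<n. point len e s = x i \<and> t = len e \<and> deg E (snd e) = 1 \<and>
          (\<forall>j<n. \<forall>u. s < u \<and> u \<le> t \<longrightarrow> point len e u \<noteq> x j))
    \<or> (\<exists>i<n. point len e t = x i \<and> s = 0 \<and> deg E (fst e) = 1 \<and>
          (\<forall>j<n. \<forall>u. s \<le> u \<and> u < t \<longrightarrow> point len e u \<noteq> x j))
    \<or> \<comment> \<open>(ii): one end a player, the other the midpoint to a neighbouring player on e\<close>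
      (\<exists>i<n. \<exists>l<n. \<exists>p q. 0 \<le> p \<and> p \<le> len e \<and> 0 \<le> q \<and> q \<le> len e \<and>
          point len e p = x i \<and> point len e q = x l \<and>
          (\<forall>j<n. \<forall>u. min p q < u \<and> u < max p q \<longrightarrow> point len e u \<noteq> x j) \<and>
          {s, t} = {p, (p + q) / 2}))"

end

theory Submission
  imports Defs
begin

text \<open>The payoffs of all players add up to \<open>\<Lambda>\<close>, so some player \<open>j\<close> earns at most
\<open>\<Lambda>/n\<close>. A half interval contains no player, and each of its consumers is at least as close
to its player end \<open>a\<close> as to any player. If it were longer than \<open>\<Lambda>/n\<close>, player \<open>j\<close> could
relocate into it at distance \<open>\<epsilon>\<close> from \<open>a\<close>; it would then be the unique closest location for
all consumers of the interval beyond that point and earn at least its length minus \<open>\<epsilon>\<close>,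
contradicting the equilibrium for small \<open>\<epsilon>\<close>.\<close>

section \<open>Distances in the network\<close>

lemma network_edgeD:
  assumes "network V E len" "e \<in> E"
  shows "fst e \<in> V" "snd e \<in> V" "fst e \<noteq> snd e" "len e > 0" "finite E"
proof -
  show "finite E" using assms(1) unfolding network_def by (meson finite_SigmaI finite_subset)
qed (use assms in \<open>auto simp: network_def\<close>)

lemma elen_pos:
  assumes "adjacent E u w" "\<forall>f\<in>E. len f > 0"
  shows "elen E len u w > 0"
  using assms by (auto simp: adjacent_def elen_def)

lemma walk_elen_nonneg:
  assumes "is_walk E xs" "\<forall>f\<in>E. len f > 0" "Suc k < length xs"
  shows "0 \<le> elen E len (xs ! k) (xs ! Suc k)"
proof -
  have "adjacent E (xs ! k) (xs ! Suc k)" using assms(1,3) by (simp add: is_walk_def)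
  then show ?thesis using elen_pos[OF _ assms(2)] by (simp add: less_imp_le)
qed

lemma walk_len_nonneg:
  assumes "is_walk E xs" "\<forall>f\<in>E. len f > 0"
  shows "0 \<le> walk_len E len xs"
  unfolding walk_len_def by (rule sum_nonneg) (use walk_elen_nonneg[OF assms] in auto)

lemma walk_lengths_nonempty:
  assumes "network V E len" "u \<in> V" "w \<in> V"
  shows "{walk_len E len xs | xs. is_walk E xs \<and> hd xs = u \<and> last xs = w} \<noteq> {}"
  using assms unfolding network_def connected_graph_def by blast

lemma vdist_nonneg:
  assumes "network V E len" "u \<in> V" "w \<in> V"
  shows "0 \<le> vdist E len u w"
  unfolding vdist_def
proof (rule cInf_greatest[OF walk_lengths_nonempty[OF assms]])
  fix r assume "r \<in> {walk_len E len xs | xs. is_walk E xs \<and> hd xs = u \<and> last xs = w}"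
  then show "0 \<le> r" using walk_len_nonneg assms(1) by (auto simp: network_def)
qed

lemma leaf_incident_edges:
  assumes "e \<in> E" "deg E w = 1" "w = fst e \<or> w = snd e"
  shows "{f \<in> E. fst f = w \<or> snd f = w} = {e}"
proof -
  obtain y where "{f \<in> E. fst f = w \<or> snd f = w} = {y}"
    using assms(2) card_1_singletonE unfolding deg_def by blast
  moreover have "e \<in> {f \<in> E. fst f = w \<or> snd f = w}" using assms(1,3) by auto
  ultimately show ?thesis by auto
qed

text \<open>Every walk into a leaf ends with the leaf's unique edge.\<close>

lemma vdist_to_leaf_ge:
  assumes net: "network V E len" and star: "{f \<in> E. fst f = w \<or> snd f = w} = {e}"
    and v: "v \<in> V" "w \<in> V" "v \<noteq> w"
  shows "len e \<le> vdist E len v w"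
  unfolding vdist_def
proof (rule cInf_greatest[OF walk_lengths_nonempty[OF net v(1,2)]])
  fix r assume "r \<in> {walk_len E len xs | xs. is_walk E xs \<and> hd xs = v \<and> last xs = w}"
  then obtain xs where r: "r = walk_len E len xs" and W: "is_walk E xs" "hd xs = v" "last xs = w"
    by blast
  have pos: "\<forall>f\<in>E. len f > 0" using net by (simp add: network_def)
  have "xs \<noteq> []" using W(1) by (simp add: is_walk_def)
  with W v have long: "2 \<le> length xs" by (cases xs) (auto simp: Suc_le_eq)
  define k where "k = length xs - 2"
  have k: "Suc k < length xs" "xs ! Suc k = w"
    using W(3) \<open>xs \<noteq> []\<close> long by (auto simp: k_def last_conv_nth Suc_diff_Suc numeral_2_eq_2)
  have "adjacent E (xs ! k) (xs ! Suc k)" using W(1) k(1) unfolding is_walk_def by blast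
  then have "(xs ! k, w) \<in> E \<or> (w, xs ! k) \<in> E" using k(2) by (simp add: adjacent_def)
  moreover have "f = e" if "f \<in> E" "fst f = w \<or> snd f = w" for f
    using star that by blast
  ultimately have "elen E len (xs ! k) w = len e"
    unfolding elen_def by (metis fst_conv snd_conv)
  then have "len e = elen E len (xs ! k) (xs ! Suc k)" using k(2) by simp
  also have "\<dots> \<le> walk_len E len xs"
    unfolding walk_len_def
  proof (rule member_le_sum)
    show "k \<in> {..<length xs - 1}" using k(1) by simp
  qed (use walk_elen_nonneg[OF W(1) pos] in auto)
  finally show "len e \<le> r" by (simp add: r)
qed

lemma Spts_cases:
  assumes "q \<in> Spts V E len"
  obtains v where "v \<in> V" "q = Vtx v"
  | e' w where "e' \<in> E" "0 < w" "w < len e'" "q = Inn e' w"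
  using assms unfolding Spts_def by blast

lemma Spts_InnD:
  assumes "Inn e w \<in> Spts V E len"
  shows "point len e w = Inn e w" "0 < w" "w < len e"
  using assms unfolding Spts_def point_def by auto

lemma pvdist_nonneg:
  assumes net: "network V E len" and q: "q \<in> Spts V E len" and w: "w \<in> V"
  shows "0 \<le> pvdist E len q w"
  using q
proof (cases rule: Spts_cases)
  case (1 v) then show ?thesis using vdist_nonneg[OF net _ w] by simp
next
  case (2 e' t)
  then show ?thesis using network_edgeD[OF net 2(1)] vdist_nonneg[OF net _ w] by simp
qed

text \<open>A point of \<open>S\<close> other than the leaf \<open>w\<close> reaches \<open>w\<close> only along the leaf edge \<open>e\<close>; the
bound \<open>far\<close> is on the distance from \<open>w\<close> within \<open>e\<close>.\<close>

lemma pvdist_to_leaf_ge: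
  assumes net: "network V E len" and eE: "e \<in> E"
    and star: "{f \<in> E. fst f = w \<or> snd f = w} = {e}" and w: "w = fst e \<or> w = snd e"
    and q: "q \<in> Spts V E len" "q \<noteq> Vtx w" and d: "d \<le> len e"
    and far: "\<And>r. q = Inn e r \<Longrightarrow> d \<le> (if w = fst e then r else len e - r)"
  shows "d \<le> pvdist E len q w"
proof -
  have wV: "w \<in> V" and ne: "fst e \<noteq> snd e" using w network_edgeD[OF net eE] by auto
  from q(1) show ?thesis
  proof (cases rule: Spts_cases)
    case (1 v)
    then have "len e \<le> vdist E len v w" using q(2) wV by (intro vdist_to_leaf_ge[OF net star]) auto
    with 1 d show ?thesis by simp
  next
    case (2 e' r)
    note e'V = network_edgeD(1,2)[OF net 2(1)]
    show ?thesis
    proof (cases "e' = e")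
      case True
      have "len e \<le> vdist E len (if w = fst e then snd e else fst e) w"
        using w ne e'V True by (intro vdist_to_leaf_ge[OF net star]) auto
      moreover have "0 \<le> vdist E len w w" using vdist_nonneg[OF net wV wV] .
      ultimately show ?thesis
        using 2 True far[of r] w d by (auto split: if_splits)
    next
      case False
      then have "fst e' \<noteq> w" "snd e' \<noteq> w" using star 2(1) by blast+
      then have "len e \<le> vdist E len (fst e') w" "len e \<le> vdist E len (snd e') w"
        using e'V wV by (auto intro: vdist_to_leaf_ge[OF net star])
      then show ?thesis using 2 d by auto
    qed
  qed
qed

lemma pdist_Inn_ge:
  assumes "r \<le> u + pvdist E len q (fst e)" "r \<le> len e - u + pvdist E len q (snd e)"
    "\<And>w. q = Inn e w \<Longrightarrow> r \<le> \<bar>u - w\<bar>"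
  shows "r \<le> pdist E len (Inn e u) q"
  using assms by (cases q) (auto simp: Let_def)

lemma pdist_Inn_Inn_same_edge: "pdist E len (Inn e u) (Inn e c) \<le> \<bar>u - c\<bar>"
  by (simp add: Let_def)

lemma continuous_on_pdist_Inn: "continuous_on UNIV (\<lambda>t. pdist E len (Inn e t) q)"
proof (cases q)
  case (Vtx v) then show ?thesis by (simp add: Let_def, intro continuous_intros)
next
  case (Inn e' w) then show ?thesis
    by (cases "e' = e") (simp_all add: Let_def, (intro continuous_intros)+)
qed

section \<open>Shares and payoffs\<close>

lemma share_nonneg: "0 \<le> share E len n x i y"
  unfolding share_def Let_def by auto

lemma card_colocated_pos:
  fixes n :: nat
  assumes "i < n"
  shows "0 < card {j \<in> {..<n}. x j = x i}"
proof -
  have "{j \<in> {..<n}. x j = x i} \<noteq> {}" using assms by blast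
  then show ?thesis by (simp add: card_gt_0_iff)
qed

lemma share_le_1:
  assumes "i < n"
  shows "share E len n x i y \<le> 1"
proof -
  define C where "C = {l \<in> occupied n x. pdist E len y l = Min ((\<lambda>l. pdist E len y l) ` occupied n x)}"
  define K where "K = card {j \<in> {..<n}. x j = x i}"
  have sh: "share E len n x i y = (if x i \<in> C then 1 / (real (card C) * real K) else 0)"
    by (simp add: share_def Let_def C_def K_def)
  have "finite C" by (simp add: C_def occupied_def)
  then have "1 \<le> card C" if "x i \<in> C"
    using that by (auto simp: Suc_le_eq card_gt_0_iff)
  moreover have "1 \<le> K" using card_colocated_pos[OF assms, of x] by (simp add: K_def)
  ultimately have "x i \<in> C \<Longrightarrow> 1 * 1 \<le> real (card C) * real K"
    by (intro mult_mono) simp_all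
  then show ?thesis by (auto simp: sh)
qed

lemma sum_share_eq_1:
  assumes "n > 0"
  shows "(\<Sum>i<n. share E len n x i y) = 1"
proof -
  define L where "L = occupied n x"
  define C where "C = {l \<in> L. pdist E len y l = Min ((\<lambda>l. pdist E len y l) ` L)}"
  define k where "k = (\<lambda>c. card {j \<in> {..<n}. x j = c})"
  have finL: "finite L" and img: "x ` {..<n} \<subseteq> L" by (auto simp: L_def occupied_def)
  have "L \<noteq> {}" using assms by (auto simp: L_def occupied_def)
  then have "Min ((\<lambda>l. pdist E len y l) ` L) \<in> (\<lambda>l. pdist E len y l) ` L"
    using finL by (intro Min_in) auto
  then have "C \<noteq> {}" by (auto simp: C_def)
  have CL: "C \<subseteq> L" by (auto simp: C_def)
  have sh: "share E len n x i y = (if x i \<in> C then 1 / (real (card C) * real (k (x i))) else 0)" for i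
    unfolding share_def Let_def L_def[symmetric] C_def[symmetric] k_def by simp
  have "(\<Sum>i<n. share E len n x i y) = (\<Sum>c\<in>L. \<Sum>i | i \<in> {..<n} \<and> x i = c. share E len n x i y)"
    using sum.group[OF finite_lessThan finL img, of "\<lambda>i. share E len n x i y"] by simp
  also have "\<dots> = (\<Sum>c\<in>L. if c \<in> C then 1 / real (card C) else 0)"
  proof (rule sum.cong[OF refl])
    fix c assume "c \<in> L"
    then have kpos: "k c > 0" by (auto simp: L_def occupied_def k_def card_gt_0_iff)
    have "(\<Sum>i | i \<in> {..<n} \<and> x i = c. share E len n x i y)
        = real (k c) * (if c \<in> C then 1 / (real (card C) * real (k c)) else 0)"
      by (simp add: sh k_def)
    then show "(\<Sum>i | i \<in> {..<n} \<and> x i = c. share E len n x i y)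
        = (if c \<in> C then 1 / real (card C) else 0)" using kpos by simp
  qed
  also have "\<dots> = (\<Sum>c\<in>C. 1 / real (card C))"
    using finL CL by (simp add: sum.If_cases Int_absorb1)
  also have "\<dots> = 1" using \<open>C \<noteq> {}\<close> finL CL by (simp add: finite_subset)
  finally show ?thesis .
qed

text \<open>Expresses the share through continuous distances and finite sums, so that measurability
follows syntactically.\<close>

lemma share_conv_sum:
  assumes "i < n"
  shows "share E len n x i y = (let L = occupied n x; m = Min ((\<lambda>l. pdist E len y l) ` L) in
     if pdist E len y (x i) = m
     then 1 / ((\<Sum>l\<in>L. if pdist E len y l = m then 1 else 0) * real (card {j \<in> {..<n}. x j = x i}))
     else 0)"
proof -
  have card_eq_sum: "real (card {l \<in> L. P l}) = (\<Sum>l\<in>L. if P l then 1 else 0)"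
    if "finite L" for L and P :: "'v pt \<Rightarrow> bool"
    using that by (simp add: sum.If_cases Collect_conj_eq)
  have "x i \<in> occupied n x" using assms by (auto simp: occupied_def)
  moreover have "finite (occupied n x)" by (simp add: occupied_def)
  ultimately show ?thesis unfolding share_def Let_def by (auto simp: card_eq_sum)
qed

lemma share_Inn_measurable:
  assumes "i < n" "S \<in> sets lebesgue"
  shows "(\<lambda>t. share E len n x i (Inn e t)) \<in> borel_measurable (lebesgue_on S)"
proof -
  have [measurable]: "(\<lambda>t. pdist E len (Inn e t) q) \<in> borel_measurable (lebesgue_on S)" for q
    using continuous_imp_measurable_on_sets_lebesgue[OF
        continuous_on_subset[OF continuous_on_pdist_Inn] assms(2)] by simp
  have "finite (occupied n x)" by (simp add: occupied_def)
  then show ?thesis unfolding share_conv_sum[OF assms(1)] Let_def by measurable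
qed

lemma share_point_integrable:
  assumes "i < n"
  shows "(\<lambda>t. share E len n x i (point len e t)) integrable_on {0..len e}"
proof -
  have "(\<lambda>t. share E len n x i (Inn e t)) integrable_on {0..len e}"
  proof (rule measurable_bounded_by_integrable_imp_integrable[where g = "\<lambda>_. 1"])
    show "(\<lambda>t. share E len n x i (Inn e t)) \<in> borel_measurable (lebesgue_on {0..len e})"
      by (rule share_Inn_measurable[OF assms]) simp
    show "norm (share E len n x i (Inn e t)) \<le> 1" for t
      using share_nonneg[of E len n x i] share_le_1[OF assms, of E len x] by simp
  qed (simp_all add: integrable_const_ivl)
  then show ?thesis
    by (rule integrable_spike_finite[of "{0, len e}", rotated 2]) (auto simp: point_def)
qed

lemma sum_payoff:
  assumes "finite E" "n > 0" "\<forall>f\<in>E. 0 \<le> len f"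
  shows "(\<Sum>i<n. payoff E len n x i) = (\<Sum>f\<in>E. len f)"
proof -
  have "(\<Sum>i<n. payoff E len n x i)
      = (\<Sum>f\<in>E. \<Sum>i<n. integral {0..len f} (\<lambda>t. share E len n x i (point len f t)))"
    unfolding payoff_def by (rule sum.swap)
  also have "\<dots> = (\<Sum>f\<in>E. integral {0..len f} (\<lambda>t. \<Sum>i<n. share E len n x i (point len f t)))"
    by (intro sum.cong refl integral_sum[symmetric]) (simp_all add: share_point_integrable)
  also have "\<dots> = (\<Sum>f\<in>E. len f)"
    using assms(3) by (simp add: sum_share_eq_1[OF assms(2)])
  finally show ?thesis .
qed

lemma exists_payoff_le_average:
  assumes "finite E" "n > 0" "\<forall>f\<in>E. 0 \<le> len f"
  obtains j where "j < n" "payoff E len n x j \<le> (\<Sum>f\<in>E. len f) / real n"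
proof (rule ccontr)
  assume "\<not> thesis"
  then have "\<forall>j\<in>{..<n}. (\<Sum>f\<in>E. len f) / real n < payoff E len n x j" using that by force
  then have "(\<Sum>j<n. (\<Sum>f\<in>E. len f) / real n) < (\<Sum>j<n. payoff E len n x j)"
    using assms(2) by (intro sum_strict_mono) auto
  then show False using assms by (simp add: sum_payoff)
qed

lemma share_eq_1_if_strictly_closest:
  assumes j: "j < n"
    and closer: "\<And>k. k < n \<Longrightarrow> k \<noteq> j \<Longrightarrow> pdist E len y (x j) < pdist E len y (x k)"
  shows "share E len n x j y = 1"
proof -
  define D where "D = (\<lambda>l. pdist E len y l)"
  have L: "finite (occupied n x)" "x j \<in> occupied n x" using j by (auto simp: occupied_def)
  have less: "D (x j) < D l" if "l \<in> occupied n x" "l \<noteq> x j" for l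
    using that closer by (auto simp: D_def occupied_def)
  then have "Min (D ` occupied n x) = D (x j)"
    using L by (intro Min_eqI) (auto intro: less_imp_le)
  then have "{l \<in> occupied n x. D l = Min (D ` occupied n x)} = {x j}"
    using L less by force
  moreover have "{k \<in> {..<n}. x k = x j} = {j}"
    using j closer by force
  ultimately show ?thesis
    unfolding share_def Let_def D_def[symmetric] by simp
qed

lemma payoff_ge_captured_interval:
  assumes "finite E" "e \<in> E" "j < n" "0 \<le> lo" "lo \<le> hi" "hi \<le> len e"
    and captured: "\<And>u. lo < u \<Longrightarrow> u < hi \<Longrightarrow> share E len n x j (point len e u) = 1"
  shows "hi - lo \<le> payoff E len n x j"
proof -
  define h where "h = (\<lambda>f t. share E len n x j (point len f t))"
  have "((\<lambda>_. 1::real) has_integral (hi - lo)) {lo..hi}"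
    using has_integral_const_real[of "1::real" lo hi] assms(5) by simp
  then have "(h e has_integral (hi - lo)) {lo..hi}"
    by (rule has_integral_spike_finite[where S = "{lo, hi}", rotated 2]) (auto simp: captured h_def)
  then have "hi - lo = integral {lo..hi} (h e)" by (simp add: integral_unique)
  also have "\<dots> \<le> integral {0..len e} (h e)"
  proof (rule integral_subset_le)
    show "h e integrable_on {0..len e}" unfolding h_def by (rule share_point_integrable[OF assms(3)])
    then show "h e integrable_on {lo..hi}"
      using integrable_on_subinterval[of "h e" "{0..len e}" lo hi] assms(4,6) by auto
  qed (use assms(4,6) in \<open>auto simp: h_def share_nonneg\<close>)
  also have "\<dots> \<le> (\<Sum>f\<in>E. integral {0..len f} (h f))"
    using assms(1,2) share_point_integrable[OF assms(3)]
    by (intro member_le_sum integral_nonneg) (auto simp: h_def share_nonneg)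
  also have "\<dots> = payoff E len n x j" by (simp add: payoff_def h_def)
  finally show ?thesis .
qed

section \<open>Capturable intervals\<close>

definition capturable :: "('v \<times> 'v) set \<Rightarrow> ('v \<times> 'v \<Rightarrow> real) \<Rightarrow> nat \<Rightarrow> (nat \<Rightarrow> 'v pt)
    \<Rightarrow> 'v \<times> 'v \<Rightarrow> real \<Rightarrow> real \<Rightarrow> real \<Rightarrow> bool" where
  "capturable E len n x e \<alpha> \<beta> a \<longleftrightarrow> (a = \<alpha> \<or> a = \<beta>) \<and>
     (\<forall>k<n. \<forall>u. \<alpha> < u \<and> u < \<beta> \<longrightarrow> \<bar>u - a\<bar> \<le> pdist E len (Inn e u) (x k))"

text \<open>Moving to \<open>c\<close> captures the part of the segment beyond \<open>c\<close> as seen from \<open>a\<close>. No other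
player can sit at \<open>c\<close>, since it would be at distance \<open>0 < \<bar>c - a\<bar>\<close> from the consumer \<open>c\<close>.\<close>

lemma capturable_deviation_payoff_ge:
  assumes cap: "capturable E len n x e \<alpha> \<beta> a" and "finite E" "e \<in> E" "j < n"
    and "0 \<le> \<alpha>" "\<beta> \<le> len e" and c: "\<alpha> < c" "c < \<beta>"
  shows "\<beta> - \<alpha> - \<bar>c - a\<bar> \<le> payoff E len n (x(j := Inn e c)) j"
proof -
  define lo where "lo = (if a = \<alpha> then c else \<alpha>)"
  define hi where "hi = (if a = \<alpha> then \<beta> else c)"
  have a: "a = \<alpha> \<or> a = \<beta>" and bound: "\<And>k u. k < n \<Longrightarrow> \<alpha> < u \<Longrightarrow> u < \<beta> \<Longrightarrow>
      \<bar>u - a\<bar> \<le> pdist E len (Inn e u) (x k)"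
    using cap by (auto simp: capturable_def)
  have lohi: "\<alpha> \<le> lo" "lo \<le> hi" "hi \<le> \<beta>" "hi - lo = \<beta> - \<alpha> - \<bar>c - a\<bar>"
    using a c by (auto simp: lo_def hi_def)
  have "hi - lo \<le> payoff E len n (x(j := Inn e c)) j"
  proof (rule payoff_ge_captured_interval[OF assms(2-4)])
    fix u assume u: "lo < u" "u < hi"
    then have "\<alpha> < u" "u < \<beta>" "\<bar>u - c\<bar> < \<bar>u - a\<bar>"
      using a c by (auto simp: lo_def hi_def)
    then have "point len e u = Inn e u"
      using assms(5,6) by (simp add: point_def)
    moreover have "pdist E len (Inn e u) (Inn e c) < pdist E len (Inn e u) (x k)"
      if "k < n" for k
      using pdist_Inn_Inn_same_edge[of E len e u c] bound[OF that \<open>\<alpha> < u\<close> \<open>u < \<beta>\<close>]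
        \<open>\<bar>u - c\<bar> < \<bar>u - a\<bar>\<close> by linarith
    ultimately show "share E len n (x(j := Inn e c)) j (point len e u) = 1"
      using assms(4) by (intro share_eq_1_if_strictly_closest) auto
  qed (use lohi assms(5,6) in auto)
  then show ?thesis using lohi by simp
qed

lemma capturable_le_average:
  assumes net: "network V E len" and ne: "nash_eq V E len n x" and "n > 0"
    and eE: "e \<in> E" and "0 \<le> \<alpha>" "\<alpha> < \<beta>" "\<beta> \<le> len e"
    and cap: "capturable E len n x e \<alpha> \<beta> a"
  shows "\<beta> - \<alpha> \<le> (\<Sum>f\<in>E. len f) / real n"
proof -
  have fin: "finite E" and "\<forall>f\<in>E. 0 \<le> len f"
    using network_edgeD(4,5)[OF net] eE by (auto simp: less_imp_le)
  then obtain j where j: "j < n" "payoff E len n x j \<le> (\<Sum>f\<in>E. len f) / real n"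
    using exists_payoff_le_average \<open>n > 0\<close> by blast
  have a: "a = \<alpha> \<or> a = \<beta>" using cap by (simp add: capturable_def)
  show ?thesis
  proof (rule field_le_epsilon)
    fix \<epsilon> :: real assume "0 < \<epsilon>"
    define \<delta> where "\<delta> = min \<epsilon> ((\<beta> - \<alpha>) / 2)"
    define c where "c = (if a = \<alpha> then \<alpha> + \<delta> else \<beta> - \<delta>)"
    have "0 < \<delta>" "\<delta> < \<beta> - \<alpha>" "\<delta> \<le> \<epsilon>"
      using \<open>0 < \<epsilon>\<close> \<open>\<alpha> < \<beta>\<close> unfolding \<delta>_def min_def by auto
    then have c: "\<alpha> < c" "c < \<beta>" "\<bar>c - a\<bar> \<le> \<epsilon>"
      using a by (auto simp: c_def)
    have "0 < c" "c < len e" using c assms(5,7) by auto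
    then have "Inn e c \<in> Spts V E len" using eE unfolding Spts_def by blast
    then have "payoff E len n (x(j := Inn e c)) j \<le> payoff E len n x j"
      using ne j(1) by (simp add: nash_eq_def)
    moreover have "\<beta> - \<alpha> - \<bar>c - a\<bar> \<le> payoff E len n (x(j := Inn e c)) j"
      using capturable_deviation_payoff_ge[OF cap fin eE j(1)] c assms(5,7) by blast
    ultimately show "\<beta> - \<alpha> \<le> (\<Sum>f\<in>E. len f) / real n + \<epsilon>" using j(2) c(3) by linarith
  qed
qed

section \<open>Half intervals are capturable\<close>

lemma leaf_snd_segment_capturable:
  assumes net: "network V E len" and prof: "profile V E len n x" and eE: "e \<in> E"
    and "0 \<le> s" and leaf: "deg E (snd e) = 1"
    and empty: "\<forall>j<n. \<forall>u. s < u \<and> u \<le> len e \<longrightarrow> point len e u \<noteq> x j"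
  shows "capturable E len n x e s (len e) s"
  unfolding capturable_def
proof (intro conjI allI impI disjI1 refl)
  fix k u assume k: "k < n" and u: "s < u \<and> u < len e"
  have xk: "x k \<in> Spts V E len" using prof k by (simp add: profile_def)
  note empty_k = empty[rule_format, OF k]
  have left: "r \<le> s" if "x k = Inn e r" for r
  proof (rule ccontr)
    assume "\<not> r \<le> s"
    moreover have "point len e r = x k" "r < len e" using Spts_InnD[of e r V E len] xk that by auto
    ultimately show False using empty_k[of r] by simp
  qed
  have "len e - s \<le> pvdist E len (x k) (snd e)"
  proof (rule pvdist_to_leaf_ge[OF net eE _ _ xk])
    show "{f \<in> E. fst f = snd e \<or> snd f = snd e} = {e}" by (rule leaf_incident_edges[OF eE leaf]) simp
    have "point len e (len e) = Vtx (snd e)" using network_edgeD(4)[OF net eE] by (simp add: point_def)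
    then show "x k \<noteq> Vtx (snd e)" using empty_k[of "len e"] u by simp
    show "len e - s \<le> (if snd e = fst e then r else len e - r)" if "x k = Inn e r" for r
      using left[OF that] network_edgeD(3)[OF net eE] by simp
  qed (use \<open>0 \<le> s\<close> in simp_all)
  moreover have "0 \<le> pvdist E len (x k) (fst e)"
    using pvdist_nonneg[OF net xk network_edgeD(1)[OF net eE]] .
  ultimately show "\<bar>u - s\<bar> \<le> pdist E len (Inn e u) (x k)"
  proof (intro pdist_Inn_ge)
    show "\<bar>u - s\<bar> \<le> \<bar>u - r\<bar>" if "x k = Inn e r" for r using left[OF that] u by simp
  qed (use u \<open>0 \<le> s\<close> in simp_all)
qed

lemma leaf_fst_segment_capturable:
  assumes net: "network V E len" and prof: "profile V E len n x" and eE: "e \<in> E"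
    and "0 < t" "t \<le> len e" and leaf: "deg E (fst e) = 1"
    and empty: "\<forall>j<n. \<forall>u. 0 \<le> u \<and> u < t \<longrightarrow> point len e u \<noteq> x j"
  shows "capturable E len n x e 0 t t"
  unfolding capturable_def
proof (intro conjI allI impI disjI2 refl)
  fix k u assume k: "k < n" and u: "0 < u \<and> u < t"
  have xk: "x k \<in> Spts V E len" using prof k by (simp add: profile_def)
  note empty_k = empty[rule_format, OF k]
  have right: "t \<le> r" if "x k = Inn e r" for r
  proof (rule ccontr)
    assume "\<not> t \<le> r"
    moreover have "point len e r = x k" "0 < r" using Spts_InnD[of e r V E len] xk that by auto
    ultimately show False using empty_k[of r] by simp
  qed
  have "t \<le> pvdist E len (x k) (fst e)"
  proof (rule pvdist_to_leaf_ge[OF net eE _ _ xk])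
    show "{f \<in> E. fst f = fst e \<or> snd f = fst e} = {e}" by (rule leaf_incident_edges[OF eE leaf]) simp
    show "x k \<noteq> Vtx (fst e)" using empty_k[of 0] \<open>0 < t\<close> by (simp add: point_def)
    show "t \<le> (if fst e = fst e then r else len e - r)" if "x k = Inn e r" for r
      using right[OF that] by simp
  qed (use \<open>t \<le> len e\<close> in simp_all)
  moreover have "0 \<le> pvdist E len (x k) (snd e)"
    using pvdist_nonneg[OF net xk network_edgeD(2)[OF net eE]] .
  ultimately show "\<bar>u - t\<bar> \<le> pdist E len (Inn e u) (x k)"
  proof (intro pdist_Inn_ge)
    show "\<bar>u - t\<bar> \<le> \<bar>u - r\<bar>" if "x k = Inn e r" for r using right[OF that] u by simp
  qed (use u \<open>t \<le> len e\<close> in simp_all)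
qed

lemma midpoint_segment_capturable:
  assumes net: "network V E len" and prof: "profile V E len n x" and eE: "e \<in> E"
    and pq: "0 \<le> p" "p \<le> len e" "0 \<le> q" "q \<le> len e"
    and empty: "\<forall>j<n. \<forall>u. min p q < u \<and> u < max p q \<longrightarrow> point len e u \<noteq> x j"
  shows "capturable E len n x e (min p ((p + q) / 2)) (max p ((p + q) / 2)) p"
  unfolding capturable_def
proof (intro conjI allI impI)
  show "p = min p ((p + q) / 2) \<or> p = max p ((p + q) / 2)" by linarith
  fix k u assume k: "k < n" and u: "min p ((p + q) / 2) < u \<and> u < max p ((p + q) / 2)"
  have xk: "x k \<in> Spts V E len" using prof k by (simp add: profile_def)
  have outside: "\<not> (min p q < r \<and> r < max p q)" if "x k = Inn e r" for r
    using empty k Spts_InnD[of e r V E len] xk that by force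
  have nonneg: "0 \<le> pvdist E len (x k) (fst e)" "0 \<le> pvdist E len (x k) (snd e)"
    using pvdist_nonneg[OF net xk] network_edgeD(1,2)[OF net eE] by auto
  have near: "\<bar>u - p\<bar> \<le> u" "\<bar>u - p\<bar> \<le> len e - u"
      "\<And>w. \<not> (min p q < w \<and> w < max p q) \<Longrightarrow> \<bar>u - p\<bar> \<le> \<bar>u - w\<bar>"
    using pq u by (auto simp: min_def max_def abs_if split: if_splits)
  show "\<bar>u - p\<bar> \<le> pdist E len (Inn e u) (x k)"
  proof (rule pdist_Inn_ge)
    show "\<bar>u - p\<bar> \<le> u + pvdist E len (x k) (fst e)" using near(1) nonneg(1) by linarith
    show "\<bar>u - p\<bar> \<le> len e - u + pvdist E len (x k) (snd e)" using near(2) nonneg(2) by linarith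
  qed (use near(3) outside in blast)
qed

lemma half_interval_capturable:
  assumes net: "network V E len" and prof: "profile V E len n x"
    and hi: "half_interval E len n x e s t" and "s < t"
  obtains a where "capturable E len n x e s t a"
proof -
  have e: "e \<in> E" "0 \<le> s" "t \<le> len e" using hi by (auto simp: half_interval_def)
  from hi consider
      "t = len e" "deg E (snd e) = 1" "\<forall>j<n. \<forall>u. s < u \<and> u \<le> t \<longrightarrow> point len e u \<noteq> x j"
    | "s = 0" "deg E (fst e) = 1" "\<forall>j<n. \<forall>u. s \<le> u \<and> u < t \<longrightarrow> point len e u \<noteq> x j"
    | p q where "0 \<le> p" "p \<le> len e" "0 \<le> q" "q \<le> len e"
        "\<forall>j<n. \<forall>u. min p q < u \<and> u < max p q \<longrightarrow> point len e u \<noteq> x j" "{s, t} = {p, (p + q) / 2}"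
    unfolding half_interval_def by blast
  then show ?thesis
  proof cases
    case 1
    then show ?thesis using leaf_snd_segment_capturable[OF net prof e(1,2)] \<open>s < t\<close> that by auto
  next
    case 2
    then show ?thesis using leaf_fst_segment_capturable[OF net prof e(1)] \<open>s < t\<close> e(3) that by auto
  next
    case (3 p q)
    then have "s = min p ((p + q) / 2)" "t = max p ((p + q) / 2)"
      using \<open>s < t\<close> by (auto simp: doubleton_eq_iff)
    then show ?thesis using midpoint_segment_capturable[OF net prof e(1) 3(1-5)] that by simp
  qed
qed

theorem mainTheorem13:
  fixes V :: "'v set" and E :: "('v \<times> 'v) set" and len :: "'v \<times> 'v \<Rightarrow> real"
    and n :: nat and x :: "nat \<Rightarrow> 'v pt" and e :: "'v \<times> 'v" and s t :: real
  assumes "network V E len"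
    and "nash_eq V E len n x"
    and "vertex_property V E n x"
    and "half_interval E len n x e s t"
  shows "t - s \<le> (\<Sum>f\<in>E. len f) / real n"
proof (cases "s < t")
  case True
  have hi: "e \<in> E" "0 \<le> s" "t \<le> len e" "0 < n" using assms(4) by (auto simp: half_interval_def)
  have "profile V E len n x" using assms(2) by (simp add: nash_eq_def)
  then obtain a where "capturable E len n x e s t a"
    using half_interval_capturable[OF assms(1) _ assms(4) True] by blast
  then show ?thesis using capturable_le_average[OF assms(1,2)] hi True by blast
next
  case False
  have "\<forall>f\<in>E. 0 < len f" using assms(1) by (simp add: network_def)
  then have "0 \<le> (\<Sum>f\<in>E. len f) / real n" by (simp add: less_imp_le sum_nonneg)
  then show ?thesis using False by simp
qed

end
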